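(* Consider an instance of the Profile Matching Problem (defined in the context). Fix a profile $\mathbf{a}\in Q_k$, let $\mathcal{M}_\mathbf{a}$ and $\mathcal{W}_\mathbf{a}$ be the sets of men and of women whose profile equals $\mathbf{a}$, and suppose $|\mathcal{M}_\mathbf{a}|\le|\mathcal{W}_\mathbf{a}|$. Then in every stable matching, each man in $\mathcal{M}_\mathbf{a}$ is matched to a woman in $\mathcal{W}_\mathbf{a}$.
   Context: Profile Matching Problem: a set $\mathcal{M}$ of $n$ men and a set $\mathcal{W}$ of $n$ women; each participant $x$ has a profile $\mathbf{a}(x)\in Q_k=\{0,1\}^k$. The distance $d$ on $Q_k$ is either the Hamming distance $d_h(\mathbf{a},\mathbf{a}')=\sum_{i=1}^k\mathbf{1}(a_i\ne a_i')$ or the Weighted Hamming distance $d_w(\mathbf{a},\mathbf{a}')=\sum_{i=1}^k2^{-i}\mathbf{1}(a_i\ne a_i')$; $d(x,y)=d(\mathbf{a}(x),\mathbf{a}(y))$. Each participant $x$ has a tie-breaking list $T_x$ (a strict order on the opposite sex); the strict preference list of $x$ ranks the opposite sex in increasing order of $d(x,\cdot)$, ties broken by $T_x$. A matching pairs each man with at most one woman and vice versa; $(m,w)$ is a blocking pair if each strictly prefers the other to his/her partner in the matching; a matching is stable if it has no blocking pair. *)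

theory Defs
  imports Complex_Main
begin

(* Profiles: elements of Q_k = {0,1}^k, represented as bool lists of length k.
   Coordinate i (1-based in the paper) is list index i-1. *)

definition hamming :: "bool list \<Rightarrow> bool list \<Rightarrow> real" where
  "hamming a b = real (card {i. i < length a \<and> a ! i \<noteq> b ! i})"

definition weighted_hamming :: "bool list \<Rightarrow> bool list \<Rightarrow> real" where
  "weighted_hamming a b = (\<Sum>i<length a. if a ! i \<noteq> b ! i then (1/2) ^ (i + 1) else 0)"

definition admissible_distance :: "(bool list \<Rightarrow> bool list \<Rightarrow> real) \<Rightarrow> bool" where
  "admissible_distance d \<longleftrightarrow> d = hamming \<or> d = weighted_hamming"

(* Strict preference of participant x over the opposite sex:
   x strictly prefers y to z iff d(x,y) < d(x,z), or equal distances and y comes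
   before z in the tie-breaking list T_x (T x is a rank function; smaller = earlier). *)
definition prefers ::
  "(bool list \<Rightarrow> bool list \<Rightarrow> real) \<Rightarrow> ('a \<Rightarrow> bool list) \<Rightarrow> ('a \<Rightarrow> 'a \<Rightarrow> nat)
   \<Rightarrow> 'a \<Rightarrow> 'a \<Rightarrow> 'a \<Rightarrow> bool" where
  "prefers d a T x y z \<longleftrightarrow>
     d (a x) (a y) < d (a x) (a z) \<or> (d (a x) (a y) = d (a x) (a z) \<and> T x y < T x z)"

definition prefers_to_partner ::
  "(bool list \<Rightarrow> bool list \<Rightarrow> real) \<Rightarrow> ('a \<Rightarrow> bool list) \<Rightarrow> ('a \<Rightarrow> 'a \<Rightarrow> nat)
   \<Rightarrow> 'a \<Rightarrow> 'a \<Rightarrow> 'a option \<Rightarrow> bool" where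
  "prefers_to_partner d a T x y p =
     (case p of None \<Rightarrow> True | Some z \<Rightarrow> prefers d a T x y z)"

definition is_matching :: "'a set \<Rightarrow> 'a set \<Rightarrow> ('a \<Rightarrow> 'a option) \<Rightarrow> bool" where
  "is_matching M W \<mu> \<longleftrightarrow>
     (\<forall>m\<in>M. \<forall>w. \<mu> m = Some w \<longrightarrow> w \<in> W \<and> \<mu> w = Some m) \<and>
     (\<forall>w\<in>W. \<forall>m. \<mu> w = Some m \<longrightarrow> m \<in> M \<and> \<mu> m = Some w) \<and>
     (\<forall>x. x \<notin> M \<union> W \<longrightarrow> \<mu> x = None)"

definition blocking_pair ::
  "(bool list \<Rightarrow> bool list \<Rightarrow> real) \<Rightarrow> ('a \<Rightarrow> bool list) \<Rightarrow> ('a \<Rightarrow> 'a \<Rightarrow> nat)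
   \<Rightarrow> ('a \<Rightarrow> 'a option) \<Rightarrow> 'a \<Rightarrow> 'a \<Rightarrow> bool" where
  "blocking_pair d a T \<mu> m w \<longleftrightarrow>
     prefers_to_partner d a T m w (\<mu> m) \<and> prefers_to_partner d a T w m (\<mu> w)"

definition stable_matching ::
  "(bool list \<Rightarrow> bool list \<Rightarrow> real) \<Rightarrow> ('a \<Rightarrow> bool list) \<Rightarrow> ('a \<Rightarrow> 'a \<Rightarrow> nat)
   \<Rightarrow> 'a set \<Rightarrow> 'a set \<Rightarrow> ('a \<Rightarrow> 'a option) \<Rightarrow> bool" where
  "stable_matching d a T M W \<mu> \<longleftrightarrow>
     is_matching M W \<mu> \<and> (\<forall>m\<in>M. \<forall>w\<in>W. \<not> blocking_pair d a T \<mu> m w)"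

definition pm_instance ::
  "nat \<Rightarrow> ('a \<Rightarrow> bool list) \<Rightarrow> ('a \<Rightarrow> 'a \<Rightarrow> nat) \<Rightarrow> 'a set \<Rightarrow> 'a set \<Rightarrow> bool" where
  "pm_instance k a T M W \<longleftrightarrow>
     finite M \<and> finite W \<and> M \<inter> W = {} \<and> card M = card W \<and>
     (\<forall>x\<in>M \<union> W. length (a x) = k) \<and>
     (\<forall>m\<in>M. inj_on (T m) W) \<and> (\<forall>w\<in>W. inj_on (T w) M)"

end

theory Submission
  imports Defs
begin

(* Participants sharing a profile are at distance 0, while any other profile is at positive
   distance; hence a man of profile p who is not matched within profile p would form a blocking
   pair with every woman of profile p, unless she is matched to another man of profile p.
   Stability therefore maps the women of profile p injectively to the men of profile p other
   than him, contradicting the cardinality assumption. *)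

lemma admissible_distance_self: "admissible_distance d \<Longrightarrow> d x x = 0"
  by (auto simp: admissible_distance_def hamming_def weighted_hamming_def)

lemma admissible_distance_pos:
  assumes "admissible_distance d" "length x = length y" "x \<noteq> y"
  shows "0 < d x y"
proof -
  obtain i where i: "i < length x" "x ! i \<noteq> y ! i"
    using assms(2,3) nth_equalityI by blast
  consider "d = hamming" | "d = weighted_hamming"
    using assms(1) by (auto simp: admissible_distance_def)
  then show ?thesis
  proof cases
    case 1
    have "{i. i < length x \<and> x ! i \<noteq> y ! i} \<noteq> {}" using i by blast
    then show ?thesis using 1 by (simp add: hamming_def card_gt_0_iff)
  next
    case 2
    have "(0::real) < (1/2) ^ (i + 1)" by simp
    also have "\<dots> = (if x ! i \<noteq> y ! i then (1/2) ^ (i + 1) else 0)" using i by simp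
    also have "\<dots> \<le> (\<Sum>j<length x. if x ! j \<noteq> y ! j then (1/2) ^ (j + 1) else 0)"
      by (rule member_le_sum) (use i in auto)
    finally show ?thesis using 2 by (simp add: weighted_hamming_def)
  qed
qed

lemma prefers_own_profile:
  assumes "admissible_distance d" "a y = a x"
    and "length (a z) = length (a x)" "a z \<noteq> a x"
  shows "prefers d a T x y z"
  using assms admissible_distance_self[OF assms(1)] admissible_distance_pos[OF assms(1)]
  by (simp add: prefers_def)

lemma is_matching_card_le:
  assumes "is_matching M W \<mu>" "A \<subseteq> W" "finite B"
    and "\<And>w. w \<in> A \<Longrightarrow> \<exists>m\<in>B. \<mu> w = Some m"
  shows "card A \<le> card B"
proof (rule card_inj_on_le)
  show "inj_on (the \<circ> \<mu>) A"
  proof (rule inj_onI)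
    fix w w' assume "w \<in> A" "w' \<in> A" "(the \<circ> \<mu>) w = (the \<circ> \<mu>) w'"
    then show "w = w'"
      using assms(1,2,4) unfolding is_matching_def by (metis comp_apply option.sel subsetD)
  qed
  show "(the \<circ> \<mu>) ` A \<subseteq> B" using assms(4) by force
qed (use assms(3) in simp)

lemma stable_matching_same_profile_partner:
  assumes "pm_instance k a T M W" "admissible_distance d" "stable_matching d a T M W \<mu>"
    and m0: "m0 \<in> M" and unmatched: "\<not> (\<exists>w\<in>W. a w = a m0 \<and> \<mu> m0 = Some w)"
    and w: "w \<in> W" "a w = a m0"
  shows "\<exists>m\<in>M - {m0}. a m = a m0 \<and> \<mu> w = Some m"
proof -
  have len: "\<And>x y. x \<in> M \<union> W \<Longrightarrow> y \<in> M \<union> W \<Longrightarrow> length (a x) = length (a y)"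
    using assms(1) by (simp add: pm_instance_def)
  have mat: "is_matching M W \<mu>"
    and no_block: "\<not> blocking_pair d a T \<mu> m0 w"
    using assms(3) m0 w(1) by (auto simp: stable_matching_def)
  have "prefers_to_partner d a T m0 w (\<mu> m0)"
  proof (cases "\<mu> m0")
    case (Some z)
    then have "z \<in> W" "a z \<noteq> a m0"
      using mat m0 unmatched unfolding is_matching_def by blast+
    then have "prefers d a T m0 w z"
      using w m0 len[of z m0] by (intro prefers_own_profile[OF assms(2)]) auto
    then show ?thesis using Some by (simp add: prefers_to_partner_def)
  qed (simp add: prefers_to_partner_def)
  then have "\<not> prefers_to_partner d a T w m0 (\<mu> w)"
    using no_block by (simp add: blocking_pair_def)
  then obtain m where mw: "\<mu> w = Some m" and not_pref: "\<not> prefers d a T w m0 m"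
    by (cases "\<mu> w") (auto simp: prefers_to_partner_def)
  have "m \<in> M" "\<mu> m = Some w"
    using mat w(1) mw unfolding is_matching_def by blast+
  moreover have "a m = a m0"
  proof (rule ccontr)
    assume "a m \<noteq> a m0"
    then have "prefers d a T w m0 m"
      using w \<open>m \<in> M\<close> len[of m w] by (intro prefers_own_profile[OF assms(2)]) auto
    then show False using not_pref by contradiction
  qed
  moreover have "m \<noteq> m0" using unmatched w \<open>\<mu> m = Some w\<close> by auto
  ultimately show ?thesis using mw by blast
qed

theorem lemmaA1:
  fixes k :: nat and d :: "bool list \<Rightarrow> bool list \<Rightarrow> real"
    and a :: "'a \<Rightarrow> bool list" and T :: "'a \<Rightarrow> 'a \<Rightarrow> nat"
    and M W :: "'a set" and p :: "bool list" and \<mu> :: "'a \<Rightarrow> 'a option"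
  assumes "pm_instance k a T M W"
    and "admissible_distance d"
    and "length p = k"
    and "card {m\<in>M. a m = p} \<le> card {w\<in>W. a w = p}"
    and "stable_matching d a T M W \<mu>"
  shows "\<forall>m\<in>{m\<in>M. a m = p}. \<exists>w\<in>{w\<in>W. a w = p}. \<mu> m = Some w"
proof (rule ballI, rule ccontr)
  fix m0 assume m0: "m0 \<in> {m\<in>M. a m = p}"
    and unmatched: "\<not> (\<exists>w\<in>{w\<in>W. a w = p}. \<mu> m0 = Some w)"
  have fin: "finite M" using assms(1) by (simp add: pm_instance_def)
  have "card {w\<in>W. a w = p} \<le> card ({m\<in>M. a m = p} - {m0})"
  proof (rule is_matching_card_le)
    show "is_matching M W \<mu>" using assms(5) by (simp add: stable_matching_def)
    show "\<exists>m\<in>{m\<in>M. a m = p} - {m0}. \<mu> w = Some m" if "w \<in> {w\<in>W. a w = p}" for w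
      using stable_matching_same_profile_partner[OF assms(1,2,5), of m0 w] m0 unmatched that
      by auto
  qed (use fin in auto)
  also have "\<dots> < card {m\<in>M. a m = p}"
    using m0 fin by (intro card_Diff1_less) auto
  finally show False using assms(4) by simp
qed

end
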